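(* Consider the following $n$-round process. In each round $i$, an adversary chooses $p_i\in[0,1]$, possibly depending on the outcomes of the first $i-1$ rounds, and then a coin with heads probability $p_i$ is tossed. Let $Z_i$ be the indicator of the event that no coin comes up heads in the first $i$ rounds (rounds $1,\dots,i$), and let $Y=\sum_{i=1}^n p_iZ_i$. Then for every real $q$ and every adversary strategy, $\Pr[Y>q]\le\exp(-q)$. *)

theory Defs
  imports "HOL-Probability.Probability"
begin

text \<open>An adversary strategy maps the history of previous coin outcomes
(a list in chronological order, True = heads) to the heads probability of
the next coin.\<close>

fun coin_process :: "(bool list \<Rightarrow> real) \<Rightarrow> nat \<Rightarrow> bool list pmf" where
  "coin_process s 0 = return_pmf []"
| "coin_process s (Suc n) =
     bind_pmf (coin_process s n) (\<lambda>h.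
       bind_pmf (bernoulli_pmf (s h)) (\<lambda>c. return_pmf (h @ [c])))"

text \<open>Round i+1 (0-indexed i): probability p = s (take i h);
Z = indicator that no heads among the first i+1 outcomes.\<close>

definition Z_ind :: "bool list \<Rightarrow> nat \<Rightarrow> real" where
  "Z_ind h i = (if True \<notin> set (take (Suc i) h) then 1 else 0)"

definition Y_val :: "(bool list \<Rightarrow> real) \<Rightarrow> nat \<Rightarrow> bool list \<Rightarrow> real" where
  "Y_val s n h = (\<Sum>i<n. s (take i h) * Z_ind h i)"

end

theory Submission imports Defs begin

text \<open>
Condition on the first coin. If it comes up heads, every Z_i vanishes and Y = 0; if it comes up
tails (probability 1 - p), Y is p plus the corresponding sum of the remaining n - 1 rounds, played
against the residual strategy. Hence for q \<ge> 0, by induction,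
Pr[Y > q] \<le> (1 - p) exp (-(q - p)) \<le> exp (-p) exp (p - q) = exp (-q),
while for q < 0 the bound exceeds 1.
\<close>

lemma measure_bind_bernoulli_pmf:
  assumes "0 \<le> p" "p \<le> 1"
  shows "measure_pmf.prob (bind_pmf (bernoulli_pmf p) f) A
        = p * measure_pmf.prob (f True) A + (1 - p) * measure_pmf.prob (f False) A"
proof -
  have "ennreal (measure_pmf.prob (bind_pmf (bernoulli_pmf p) f) A)
      = emeasure (bind_pmf (bernoulli_pmf p) f) A"
    by (simp add: measure_pmf.emeasure_eq_measure)
  also have "\<dots> = emeasure (f True) A * ennreal p + emeasure (f False) A * ennreal (1 - p)"
    using assms by simp
  also have "\<dots> = ennreal (p * measure_pmf.prob (f True) A + (1 - p) * measure_pmf.prob (f False) A)"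
    using assms
    by (simp add: measure_pmf.emeasure_eq_measure ennreal_mult' ennreal_plus mult.commute)
  finally show ?thesis
    using assms by (subst (asm) ennreal_inj) simp_all
qed

lemma coin_process_Suc_first_coin:
  "coin_process s (Suc n) = bind_pmf (bernoulli_pmf (s []))
     (\<lambda>c. map_pmf (Cons c) (coin_process (\<lambda>h. s (c # h)) n))"
proof (induction n arbitrary: s)
  case 0
  then show ?case by (simp add: bind_return_pmf)
next
  case (Suc n)
  show ?case
    by (subst coin_process.simps(2), subst Suc.IH)
      (simp add: bind_assoc_pmf bind_map_pmf map_bind_pmf)
qed

lemma Y_val_Suc_Cons:
  "Y_val s (Suc n) (c # h) = (if c then 0 else s [] + Y_val (\<lambda>h. s (False # h)) n h)"
proof -
  have "Y_val s (Suc n) (c # h)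
      = s [] * Z_ind (c # h) 0 + (\<Sum>i<n. s (c # take i h) * Z_ind (c # h) (Suc i))"
    unfolding Y_val_def by (simp only: sum.lessThan_Suc_shift) simp
  then show ?thesis
    by (cases c) (simp_all add: Z_ind_def Y_val_def)
qed

lemma prob_Y_val_gt_Suc:
  assumes "0 \<le> q" "0 \<le> s []" "s [] \<le> 1"
  shows "measure_pmf.prob (coin_process s (Suc n)) {h. Y_val s (Suc n) h > q}
       = (1 - s []) * measure_pmf.prob (coin_process (\<lambda>h. s (False # h)) n)
                        {h. Y_val (\<lambda>h. s (False # h)) n h > q - s []}"
  using assms unfolding coin_process_Suc_first_coin
  by (simp add: measure_bind_bernoulli_pmf vimage_def Y_val_Suc_Cons algebra_simps)

lemma one_minus_mult_exp_le:
  fixes p q :: real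
  assumes "p \<le> 1"
  shows "(1 - p) * exp (p - q) \<le> exp (- q)"
proof -
  have "(1 - p) * exp (p - q) \<le> exp (- p) * exp (p - q)"
    using exp_ge_add_one_self[of "- p"] assms by (intro mult_right_mono) auto
  also have "\<dots> = exp (- q)"
    by (simp flip: exp_add)
  finally show ?thesis .
qed

theorem mainTheorem14:
  fixes s :: "bool list \<Rightarrow> real" and n :: nat and q :: real
  assumes "\<And>h. 0 \<le> s h \<and> s h \<le> 1"
  shows "measure_pmf.prob (coin_process s n) {h. Y_val s n h > q} \<le> exp (- q)"
  using assms
proof (induction n arbitrary: s q)
  case 0
  then show ?case
    by (cases "q < 0") (auto simp: Y_val_def intro: order_trans[OF measure_pmf.prob_le_1])
next
  case (Suc n)
  show ?case
  proof (cases "q < 0")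
    case True
    then show ?thesis by (auto intro: order_trans[OF measure_pmf.prob_le_1])
  next
    case False
    let ?s' = "\<lambda>h. s (False # h)"
    have "measure_pmf.prob (coin_process s (Suc n)) {h. Y_val s (Suc n) h > q}
        = (1 - s []) * measure_pmf.prob (coin_process ?s' n) {h. Y_val ?s' n h > q - s []}"
      using False Suc.prems by (intro prob_Y_val_gt_Suc) auto
    also have "\<dots> \<le> (1 - s []) * exp (s [] - q)"
      using Suc.IH[of ?s' "q - s []"] Suc.prems by (intro mult_left_mono) auto
    also have "\<dots> \<le> exp (- q)"
      using Suc.prems by (intro one_minus_mult_exp_le) auto
    finally show ?thesis .
  qed
qed

end
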